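(* Let $A$ be a nonnegative random variable with a probability density function on $[0,\infty)$ and $\mathbf{E}[A]=1$, and fix $\beta\ge 0$. For $\rho>0$ define $$R(\rho)=\mathbf{E}\left[\log \frac{(\rho+1)^2\left[(1+\beta)A\rho+1\right]}{(\beta+1)\rho^2+(\beta A+2)\rho+1}\right],\qquad \bar C(\rho)=\mathbf{E}\left[\log(1+A\rho)\right].$$ Then $\lim_{\rho\to\infty}\left(\bar C(\rho)-R(\rho)\right)=0$ and $\lim_{\rho\to 0^+} R(\rho)/\bar C(\rho)=1$.
   Context: Interpretation: this concerns the channel $Y=\sqrt{A}(X+S)+Z$ with $Z\sim\mathcal{CN}(0,N)$, interference $S\sim\mathcal{CN}(0,Q)$ known noncausally to the encoder only, i.i.d. (ergodic) fading $A$ independent of $S$ known to the decoder only, input power $P$, SNR $\rho=P/N$ and interference-to-power ratio $\beta=Q/P$. $R(\rho)=I(U;Y|A)-I(U;S)$ is the rate of the dirty paper coding scheme with $X\sim\mathcal{CN}(0,P)$ independent of $S$ and auxiliary $U=X+\alpha S$, $\alpha=\rho/(1+\rho)$; $\bar C(\rho)$ is the capacity when the decoder also knows $S$. Logarithms are natural. *)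

theory Defs
  imports "HOL-Probability.Probability"
begin

text \<open>Rate of the dirty paper coding scheme, as a function of the SNR rho,
  for fading variable A on probability space M and interference ratio beta.\<close>
definition dpc_rate :: "'a measure \<Rightarrow> ('a \<Rightarrow> real) \<Rightarrow> real \<Rightarrow> real \<Rightarrow> real" where
  "dpc_rate M A \<beta> \<rho> = prob_space.expectation M (\<lambda>\<omega>.
     ln ((\<rho> + 1)^2 * ((1 + \<beta>) * A \<omega> * \<rho> + 1) /
         ((\<beta> + 1) * \<rho>^2 + (\<beta> * A \<omega> + 2) * \<rho> + 1)))"

text \<open>Capacity when the decoder also knows the interference.\<close>
definition cap_bar :: "'a measure \<Rightarrow> ('a \<Rightarrow> real) \<Rightarrow> real \<Rightarrow> real" where
  "cap_bar M A \<rho> = prob_space.expectation M (\<lambda>\<omega>. ln (1 + A \<omega> * \<rho>))"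

end

theory Submission
  imports Defs "HOL-Real_Asymp.Real_Asymp"
begin

text \<open>
  For \<open>a, \<rho> \<ge> 0\<close> the integrand of the rate splits as
  \<open>ln (1 + (1 + \<beta>) a \<rho>) - ln (1 + \<beta> \<rho> (\<rho> + a) / (\<rho> + 1)\<^sup>2)\<close>.
  Compared with \<open>ln (1 + a \<rho>)\<close>, the first term gains at most \<open>ln (1 + \<beta>)\<close>, which is
  exactly what the second term subtracts as \<open>\<rho> \<rightarrow> \<infinity>\<close>; so the gap to the capacity
  integrand vanishes pointwise wherever \<open>a > 0\<close> (at \<open>a = 0\<close> it tends to \<open>ln (1 + \<beta>)\<close>,
  which is why the density hypothesis is needed: it makes \<open>A > 0\<close> almost surely).
  Near \<open>\<rho> = 0\<close> both terms are \<open>O(\<rho>)\<close>, with slopes \<open>(1 + \<beta>) a\<close> and \<open>\<beta> a\<close>, so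
  \<open>R(\<rho>)/\<rho>\<close> and \<open>C(\<rho>)/\<rho>\<close> both tend to \<open>E[A] = 1\<close>. The same split gives bounds affine
  in \<open>a\<close>, hence integrable dominating functions, and dominated convergence carries the
  pointwise limits over to the expectations.
\<close>

definition dpc_integrand :: "real \<Rightarrow> real \<Rightarrow> real \<Rightarrow> real" where
  "dpc_integrand \<beta> a \<rho> = ln ((\<rho> + 1)^2 * ((1 + \<beta>) * a * \<rho> + 1) /
     ((\<beta> + 1) * \<rho>^2 + (\<beta> * a + 2) * \<rho> + 1))"

lemma dpc_rate_eq: "dpc_rate M A \<beta> \<rho> = prob_space.expectation M (\<lambda>\<omega>. dpc_integrand \<beta> (A \<omega>) \<rho>)"
  unfolding dpc_rate_def dpc_integrand_def ..

lemma dpc_integrand_split: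
  fixes \<beta> a \<rho> :: real
  assumes "\<beta> \<ge> 0" "a \<ge> 0" "\<rho> \<ge> 0"
  shows "dpc_integrand \<beta> a \<rho> = ln (1 + (1 + \<beta>) * a * \<rho>) - ln (1 + \<beta> * \<rho> * (\<rho> + a) / (\<rho> + 1)^2)"
proof -
  have sq: "(\<rho> + 1)^2 > 0" using assms by simp
  have den: "(\<beta> + 1) * \<rho>^2 + (\<beta> * a + 2) * \<rho> + 1 = (\<rho> + 1)^2 * (1 + \<beta> * \<rho> * (\<rho> + a) / (\<rho> + 1)^2)"
    using sq by (simp add: field_simps power2_eq_square)
  have "0 \<le> \<beta> * \<rho> * (\<rho> + a) / (\<rho> + 1)^2" using assms by simp
  moreover have "0 \<le> (1 + \<beta>) * a * \<rho>" using assms by simp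
  ultimately show ?thesis
    unfolding dpc_integrand_def den using sq by (simp add: ln_div add.commute)
qed

lemma dpc_penalty_le:
  fixes \<beta> a \<rho> :: real
  assumes "\<beta> \<ge> 0" "a \<ge> 0" "\<rho> \<ge> 0"
  shows "\<beta> * \<rho> * (\<rho> + a) / (\<rho> + 1)^2 \<le> \<beta> * (1 + a)"
    and "\<beta> * \<rho> * (\<rho> + a) / (\<rho> + 1)^2 \<le> \<rho> * \<beta> * (1 + a)"
proof -
  have sq: "(\<rho> + 1)^2 > 0" using assms by simp
  have "\<rho> * (\<rho> + a) \<le> (1 + a) * (\<rho> + 1)^2"
    using assms by (simp add: power2_eq_square algebra_simps mult_left_le)
  then have "\<beta> * (\<rho> * (\<rho> + a)) \<le> \<beta> * ((1 + a) * (\<rho> + 1)^2)"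
    using assms(1) by (rule mult_left_mono)
  then show "\<beta> * \<rho> * (\<rho> + a) / (\<rho> + 1)^2 \<le> \<beta> * (1 + a)"
    using sq by (simp add: divide_le_eq mult.assoc)
  have "\<rho> + a \<le> (1 + a) * (\<rho> + 1)^2"
    using assms by (simp add: power2_eq_square algebra_simps mult_left_le)
  then have "\<beta> * \<rho> * (\<rho> + a) \<le> \<beta> * \<rho> * ((1 + a) * (\<rho> + 1)^2)"
    using assms by (intro mult_left_mono) auto
  then show "\<beta> * \<rho> * (\<rho> + a) / (\<rho> + 1)^2 \<le> \<rho> * \<beta> * (1 + a)"
    using sq by (simp add: divide_le_eq mult_ac)
qed

lemma abs_ln_one_plus_minus_dpc_integrand_le:
  fixes \<beta> a \<rho> :: real
  assumes \<beta>: "\<beta> \<ge> 0" and "a \<ge> 0" "\<rho> \<ge> 0"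
  shows "\<bar>ln (1 + a * \<rho>) - dpc_integrand \<beta> a \<rho>\<bar> \<le> ln (1 + \<beta>) + \<beta> * (1 + a)"
proof -
  define s where "s = \<beta> * \<rho> * (\<rho> + a) / (\<rho> + 1)^2"
  have s: "0 \<le> s" "s \<le> \<beta> * (1 + a)"
    using dpc_penalty_le(1)[OF assms] assms unfolding s_def by simp_all
  have "0 \<le> a * \<rho>" "a * \<rho> \<le> (1 + \<beta>) * a * \<rho>"
    using assms by (simp_all add: algebra_simps)
  then have pos: "0 < 1 + a * \<rho>" and "ln (1 + a * \<rho>) \<le> ln (1 + (1 + \<beta>) * a * \<rho>)"
    by simp_all
  moreover have "ln (1 + (1 + \<beta>) * a * \<rho>) \<le> ln ((1 + \<beta>) * (1 + a * \<rho>))"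
    using assms by (intro ln_mono) (simp_all add: algebra_simps add_pos_nonneg)
  moreover have "ln ((1 + \<beta>) * (1 + a * \<rho>)) = ln (1 + \<beta>) + ln (1 + a * \<rho>)"
    using pos \<beta> by (simp add: ln_mult)
  moreover have "0 \<le> ln (1 + s)" "ln (1 + s) \<le> \<beta> * (1 + a)"
    using s ln_add_one_self_le_self[of s] by simp_all
  moreover have "0 \<le> ln (1 + \<beta>)" using \<beta> by simp
  ultimately show ?thesis
    using dpc_integrand_split[OF assms] unfolding s_def abs_le_iff by linarith
qed

lemma abs_dpc_integrand_le:
  fixes \<beta> a \<rho> :: real
  assumes "\<beta> \<ge> 0" "a \<ge> 0" "\<rho> \<ge> 0"
  shows "\<bar>dpc_integrand \<beta> a \<rho>\<bar> \<le> \<rho> * (\<beta> + (1 + 2 * \<beta>) * a)"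
proof -
  define s where "s = \<beta> * \<rho> * (\<rho> + a) / (\<rho> + 1)^2"
  have s: "0 \<le> s" "s \<le> \<rho> * \<beta> * (1 + a)"
    using dpc_penalty_le(2)[OF assms] assms unfolding s_def by simp_all
  have "0 \<le> (1 + \<beta>) * a * \<rho>" using assms by simp
  then have "0 \<le> ln (1 + (1 + \<beta>) * a * \<rho>)" "ln (1 + (1 + \<beta>) * a * \<rho>) \<le> (1 + \<beta>) * a * \<rho>"
    using ln_add_one_self_le_self by simp_all
  moreover have "0 \<le> ln (1 + s)" "ln (1 + s) \<le> \<rho> * \<beta> * (1 + a)"
    using s ln_add_one_self_le_self[of s] by simp_all
  ultimately show ?thesis
    using dpc_integrand_split[OF assms] unfolding s_def abs_le_iff by (simp add: algebra_simps)
qed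

lemma ln_one_plus_minus_dpc_integrand_tendsto_0:
  fixes \<beta> a :: real
  assumes "\<beta> \<ge> 0" "a > 0"
  shows "((\<lambda>\<rho>. ln (1 + a * \<rho>) - dpc_integrand \<beta> a \<rho>) \<longlongrightarrow> 0) at_top"
proof -
  have "((\<lambda>\<rho>. ln (1 + a * \<rho>) - dpc_integrand \<beta> a \<rho>) \<longlongrightarrow> ln a - ln ((1 + \<beta>) * a * inverse (\<beta> + 1))) at_top"
    unfolding dpc_integrand_def using assms by real_asymp
  moreover have "(1 + \<beta>) * a * inverse (\<beta> + 1) = a" using assms by (simp add: field_simps)
  ultimately show ?thesis by simp
qed

lemma dpc_integrand_over_rho_tendsto:
  fixes \<beta> a :: real
  assumes "\<beta> \<ge> 0" "a \<ge> 0"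
  shows "((\<lambda>\<rho>. dpc_integrand \<beta> a \<rho> / \<rho>) \<longlongrightarrow> a) (at_right 0)"
proof -
  have "((\<lambda>\<rho>. dpc_integrand \<beta> a \<rho> / \<rho>) \<longlongrightarrow> (1 + \<beta>) * a - \<beta> * a) (at_right 0)"
    unfolding dpc_integrand_def using assms by real_asymp
  then show ?thesis by (simp add: algebra_simps)
qed

lemma AE_distributed_neq:
  assumes "distributed M lborel X f"
  shows "AE x in M. X x \<noteq> (c :: real)"
proof (rule AE_distrD[OF distributed_measurable[OF assms]])
  have "AE x in density lborel f. x \<noteq> c"
    using AE_lborel_singleton[of c] distributed_borel_measurable[OF assms]
    by (auto simp: AE_density elim: AE_mp)
  then show "AE x in distr M lborel X. x \<noteq> c"
    by (simp only: distributed_distr_eq_density[OF assms])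
qed

lemma integral_dominated_convergence_at_right_0:
  fixes s :: "real \<Rightarrow> 'a \<Rightarrow> 'b::{banach, second_countable_topology}"
  assumes "f \<in> borel_measurable M" "\<And>t. s t \<in> borel_measurable M" "integrable M w"
    and "AE x in M. ((\<lambda>t. s t x) \<longlongrightarrow> f x) (at_right 0)"
    and "\<forall>\<^sub>F t in at_right 0. AE x in M. norm (s t x) \<le> w x"
  shows "((\<lambda>t. integral\<^sup>L M (s t)) \<longlongrightarrow> integral\<^sup>L M f) (at_right 0)"
  using assms unfolding filterlim_at_right_to_top eventually_at_right_to_top
  by (intro integral_dominated_convergence_at_top) (auto simp: filterlim_at_right_to_top)

context prob_space
begin

lemma integrable_ln_one_plus_mult:
  fixes A :: "'a \<Rightarrow> real"
  assumes "integrable M A" "AE \<omega> in M. A \<omega> \<ge> 0" "\<rho> \<ge> 0"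
  shows "integrable M (\<lambda>\<omega>. ln (1 + A \<omega> * \<rho>))"
proof (rule Bochner_Integration.integrable_bound)
  show "integrable M (\<lambda>\<omega>. A \<omega> * \<rho>)" using assms(1) by simp
  show "AE \<omega> in M. norm (ln (1 + A \<omega> * \<rho>)) \<le> norm (A \<omega> * \<rho>)"
    using assms(2)
  proof eventually_elim
    case (elim \<omega>)
    then have "0 \<le> A \<omega> * \<rho>" using assms(3) by simp
    then show ?case using ln_add_one_self_le_self by simp
  qed
qed (use assms(1) in measurable)

lemma integrable_dpc_integrand:
  fixes A :: "'a \<Rightarrow> real"
  assumes "integrable M A" "AE \<omega> in M. A \<omega> \<ge> 0" "\<beta> \<ge> 0" "\<rho> \<ge> 0"
  shows "integrable M (\<lambda>\<omega>. dpc_integrand \<beta> (A \<omega>) \<rho>)"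
proof (rule Bochner_Integration.integrable_bound)
  show "integrable M (\<lambda>\<omega>. \<rho> * (\<beta> + (1 + 2 * \<beta>) * A \<omega>))" using assms(1) by simp
  show "AE \<omega> in M. norm (dpc_integrand \<beta> (A \<omega>) \<rho>) \<le> norm (\<rho> * (\<beta> + (1 + 2 * \<beta>) * A \<omega>))"
    using assms(2) by eventually_elim (use assms(3,4) abs_dpc_integrand_le in auto)
qed (use assms(1) in \<open>unfold dpc_integrand_def, measurable\<close>)

lemma cap_bar_minus_dpc_rate_tendsto_0:
  fixes A :: "'a \<Rightarrow> real"
  assumes A: "integrable M A" and pos: "AE \<omega> in M. A \<omega> > 0" and \<beta>: "\<beta> \<ge> 0"
  shows "((\<lambda>\<rho>. cap_bar M A \<rho> - dpc_rate M A \<beta> \<rho>) \<longlongrightarrow> 0) at_top"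
proof -
  have nonneg: "AE \<omega> in M. A \<omega> \<ge> 0" using pos by eventually_elim simp
  have "((\<lambda>\<rho>. expectation (\<lambda>\<omega>. ln (1 + A \<omega> * \<rho>) - dpc_integrand \<beta> (A \<omega>) \<rho>))
          \<longlongrightarrow> expectation (\<lambda>\<omega>. 0)) at_top"
  proof (rule integral_dominated_convergence_at_top[where w="\<lambda>\<omega>. ln (1 + \<beta>) + \<beta> * (1 + A \<omega>)"])
    show "AE \<omega> in M. ((\<lambda>\<rho>. ln (1 + A \<omega> * \<rho>) - dpc_integrand \<beta> (A \<omega>) \<rho>) \<longlongrightarrow> 0) at_top"
      using pos by eventually_elim (rule ln_one_plus_minus_dpc_integrand_tendsto_0[OF \<beta>])
    show "\<forall>\<^sub>F \<rho> in at_top. AE \<omega> in M.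
        norm (ln (1 + A \<omega> * \<rho>) - dpc_integrand \<beta> (A \<omega>) \<rho>) \<le> ln (1 + \<beta>) + \<beta> * (1 + A \<omega>)"
      using eventually_ge_at_top[of 0]
    proof eventually_elim
      case (elim \<rho>)
      show ?case
        using nonneg by eventually_elim (use \<beta> elim abs_ln_one_plus_minus_dpc_integrand_le in simp)
    qed
  qed (use A in \<open>simp_all add: dpc_integrand_def\<close>)
  moreover have "\<forall>\<^sub>F \<rho> in at_top.
      expectation (\<lambda>\<omega>. ln (1 + A \<omega> * \<rho>) - dpc_integrand \<beta> (A \<omega>) \<rho>) = cap_bar M A \<rho> - dpc_rate M A \<beta> \<rho>"
    using eventually_ge_at_top[of 0]
    by eventually_elim (use integrable_ln_one_plus_mult[OF A nonneg] integrable_dpc_integrand[OF A nonneg \<beta>]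
        in \<open>simp add: cap_bar_def dpc_rate_eq\<close>)
  ultimately show ?thesis by (simp add: tendsto_cong)
qed

lemma expectation_over_rho_tendsto:
  fixes A :: "'a \<Rightarrow> real" and g :: "real \<Rightarrow> real \<Rightarrow> real"
  assumes A: "integrable M A" and nonneg: "AE \<omega> in M. A \<omega> \<ge> 0"
    and g_meas: "\<And>\<rho>. (\<lambda>a. g a \<rho>) \<in> borel_measurable borel"
    and g_lim: "\<And>a. a \<ge> 0 \<Longrightarrow> ((\<lambda>\<rho>. g a \<rho> / \<rho>) \<longlongrightarrow> a) (at_right 0)"
    and g_bound: "\<And>a \<rho>. a \<ge> 0 \<Longrightarrow> \<rho> > 0 \<Longrightarrow> \<bar>g a \<rho>\<bar> \<le> \<rho> * (c + d * a)"
  shows "((\<lambda>\<rho>. expectation (\<lambda>\<omega>. g (A \<omega>) \<rho>) / \<rho>) \<longlongrightarrow> expectation A) (at_right 0)"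
proof -
  have "((\<lambda>\<rho>. expectation (\<lambda>\<omega>. g (A \<omega>) \<rho> / \<rho>)) \<longlongrightarrow> expectation A) (at_right 0)"
  proof (rule integral_dominated_convergence_at_right_0[where w="\<lambda>\<omega>. c + d * A \<omega>"])
    show "AE \<omega> in M. ((\<lambda>\<rho>. g (A \<omega>) \<rho> / \<rho>) \<longlongrightarrow> A \<omega>) (at_right 0)"
      using nonneg by eventually_elim (rule g_lim)
    show "\<forall>\<^sub>F \<rho> in at_right 0. AE \<omega> in M. norm (g (A \<omega>) \<rho> / \<rho>) \<le> c + d * A \<omega>"
      using eventually_at_right_less[of 0]
    proof eventually_elim
      case (elim \<rho>)
      show ?case
        using nonneg by eventually_elim (use elim g_bound in \<open>simp add: pos_divide_le_eq mult.commute[of _ \<rho>]\<close>)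
    qed
    show "(\<lambda>\<omega>. g (A \<omega>) \<rho> / \<rho>) \<in> borel_measurable M" for \<rho>
      using measurable_compose[OF borel_measurable_integrable[OF A] g_meas] by simp
  qed (use A in simp_all)
  then show ?thesis by simp
qed

lemma dpc_rate_over_rho_tendsto:
  fixes A :: "'a \<Rightarrow> real"
  assumes "integrable M A" "AE \<omega> in M. A \<omega> \<ge> 0" "\<beta> \<ge> 0"
  shows "((\<lambda>\<rho>. dpc_rate M A \<beta> \<rho> / \<rho>) \<longlongrightarrow> expectation A) (at_right 0)"
  unfolding dpc_rate_eq
proof (rule expectation_over_rho_tendsto[OF assms(1,2), where c=\<beta> and d="1 + 2 * \<beta>"])
  show "(\<lambda>a. dpc_integrand \<beta> a \<rho>) \<in> borel_measurable borel" for \<rho>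
    unfolding dpc_integrand_def by measurable
qed (use assms(3) dpc_integrand_over_rho_tendsto abs_dpc_integrand_le in auto)

lemma cap_bar_over_rho_tendsto:
  fixes A :: "'a \<Rightarrow> real"
  assumes "integrable M A" "AE \<omega> in M. A \<omega> \<ge> 0"
  shows "((\<lambda>\<rho>. cap_bar M A \<rho> / \<rho>) \<longlongrightarrow> expectation A) (at_right 0)"
  unfolding cap_bar_def
proof (rule expectation_over_rho_tendsto[OF assms, where c=0 and d=1])
  show "((\<lambda>\<rho>. ln (1 + a * \<rho>) / \<rho>) \<longlongrightarrow> a) (at_right 0)" for a :: real
    by real_asymp
  show "\<bar>ln (1 + a * \<rho>)\<bar> \<le> \<rho> * (0 + 1 * a)" if "a \<ge> 0" "\<rho> > 0" for a \<rho> :: real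
    using that ln_add_one_self_le_self[of "a * \<rho>"] by (simp add: mult.commute)
qed simp

end

theorem mainTheorem1:
  fixes M :: "'a measure" and A :: "'a \<Rightarrow> real" and f :: "real \<Rightarrow> ennreal" and \<beta> :: real
  assumes "prob_space M"
    and "distributed M lborel A f"
    and "AE \<omega> in M. A \<omega> \<ge> 0"
    and "integrable M A"
    and "prob_space.expectation M A = 1"
    and "\<beta> \<ge> 0"
  shows "((\<lambda>\<rho>. cap_bar M A \<rho> - dpc_rate M A \<beta> \<rho>) \<longlongrightarrow> 0) at_top \<and>
         ((\<lambda>\<rho>. dpc_rate M A \<beta> \<rho> / cap_bar M A \<rho>) \<longlongrightarrow> 1) (at_right 0)"
proof
  interpret prob_space M by fact
  have pos: "AE \<omega> in M. A \<omega> > 0"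
    using AE_distributed_neq[OF assms(2), of 0] assms(3) by eventually_elim simp
  show "((\<lambda>\<rho>. cap_bar M A \<rho> - dpc_rate M A \<beta> \<rho>) \<longlongrightarrow> 0) at_top"
    using cap_bar_minus_dpc_rate_tendsto_0[OF assms(4) pos assms(6)] .
  have "((\<lambda>\<rho>. (dpc_rate M A \<beta> \<rho> / \<rho>) / (cap_bar M A \<rho> / \<rho>)) \<longlongrightarrow> 1) (at_right 0)"
    using tendsto_divide[OF dpc_rate_over_rho_tendsto[OF assms(4,3,6)] cap_bar_over_rho_tendsto[OF assms(4,3)]]
      assms(5) by simp
  moreover have "\<forall>\<^sub>F \<rho> in at_right 0.
      (dpc_rate M A \<beta> \<rho> / \<rho>) / (cap_bar M A \<rho> / \<rho>) = dpc_rate M A \<beta> \<rho> / cap_bar M A \<rho>"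
    using eventually_at_right_less[of 0] by eventually_elim simp
  ultimately show "((\<lambda>\<rho>. dpc_rate M A \<beta> \<rho> / cap_bar M A \<rho>) \<longlongrightarrow> 1) (at_right 0)"
    by (rule Lim_transform_eventually)
qed

end
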